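(* Let $\alpha,\beta,m,u$ be positive integers with $\alpha=2^u\beta$, $\beta$ odd and $\gcd(\alpha,m)=1$. Let $G := C_m\rtimes C_\alpha$, where $C_m=\langle a\rangle$, $C_\alpha=\langle x\rangle$ and $x^{-1}ax=a^{-1}$. Then the number of cyclic subgroups of $G$ equals $d(|G|)+d(\beta)\,(m-d(m))$.
   Context: $C_k$ denotes the cyclic group of order $k$; $d(k)$ denotes the number of positive divisors of $k$. *)

theory Defs
  imports "HOL-Algebra.Algebra"
begin

definition num_divisors :: "nat \<Rightarrow> nat" where
  "num_divisors k = card {d. d dvd k \<and> d > 0}"

text \<open>The pair (i, j), with
  0 \<le> i < m and 0 \<le> j < alpha, represents the element a^i x^j, so that
  (a^i x^j)(a^k x^l) = a^(i + (-1)^j k) x^(j + l).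
  This is well defined only for even alpha (as in the statement, where alpha = 2^u beta, u \<ge> 1).\<close>
definition dihedral_sdp :: "nat \<Rightarrow> nat \<Rightarrow> (nat \<times> nat) monoid" where
  "dihedral_sdp m \<alpha> =
     \<lparr> carrier = {0..<m} \<times> {0..<\<alpha>},
       monoid.mult = (\<lambda>(i, j) (k, l).
                 ((i + (if even j then k else (m - k) mod m)) mod m, (j + l) mod \<alpha>)),
       one = (0, 0) \<rparr>"

definition cyclic_subgroups :: "('a, 'b) monoid_scheme \<Rightarrow> 'a set set" where
  "cyclic_subgroups G = {H. \<exists>g \<in> carrier G. H = generate G {g}}"

end

theory Submission
  imports Defs "HOL-Number_Theory.Cong"
begin

text \<open>
  An element a^i x^j with j even lies in the abelian subgroup C_m \<times> <x^2>; since
  gcd(m, \<alpha>) = 1, the Chinese remainder theorem shows that it generates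
  <a^d> \<times> <x^e> with d = gcd(i, m) and e = gcd(j, \<alpha>) even, so these subgroups are
  counted by d(m) times the number of even divisors of \<alpha>. For j odd, the k-th power
  of a^i x^j is x^(kj) for even k and a^i x^(kj) for odd k, so the subgroup is determined
  by i and the odd divisor gcd(j, \<alpha>) of \<alpha>, which gives m d(\<beta>) further subgroups.
  The formula follows from d(m\<alpha>) = d(m) d(\<alpha>) and d(\<alpha>) = (even divisors) + d(\<beta>).
\<close>

definition multiples_below :: "nat \<Rightarrow> nat \<Rightarrow> nat set" where
  "multiples_below n d = {x. x < n \<and> d dvd x}"

lemma inj_on_multiples_below:
  assumes "n > 0"
  shows "inj_on (multiples_below n) {d. d dvd n}"
proof -
  have "d' dvd d"
    if "d dvd n" "d' dvd n" and eq: "multiples_below n d = multiples_below n d'" for d d'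
  proof (cases "d = n")
    case True
    then show ?thesis
      using \<open>d' dvd n\<close> by simp
  next
    case False
    then have "d \<in> multiples_below n d"
      using \<open>d dvd n\<close> assms by (auto simp: multiples_below_def dest: dvd_imp_le)
    then show ?thesis
      unfolding eq by (simp add: multiples_below_def)
  qed
  then show ?thesis
    by (intro inj_onI) (auto intro: dvd_antisym)
qed

lemma range_mult_mod_coprime_pair:
  fixes a b m n :: nat
  assumes "coprime m n" "m > 0" "n > 0"
  shows "range (\<lambda>k. (k * a mod m, k * b mod n))
           = multiples_below m (gcd a m) \<times> multiples_below n (gcd b n)"
proof
  show "range (\<lambda>k. (k * a mod m, k * b mod n))
          \<subseteq> multiples_below m (gcd a m) \<times> multiples_below n (gcd b n)"
    using assms by (auto simp: multiples_below_def dvd_mod)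
next
  show "multiples_below m (gcd a m) \<times> multiples_below n (gcd b n)
          \<subseteq> range (\<lambda>k. (k * a mod m, k * b mod n))"
  proof (clarify)
    fix x y
    assume "x \<in> multiples_below m (gcd a m)" "y \<in> multiples_below n (gcd b n)"
    then have x: "x < m" "gcd a m dvd x" and y: "y < n" "gcd b n dvd y"
      by (auto simp: multiples_below_def)
    obtain k1 where k1: "[a * k1 = x] (mod m)"
      using cong_solve_dvd_nat[OF x(2)] by blast
    obtain k2 where k2: "[b * k2 = y] (mod n)"
      using cong_solve_dvd_nat[OF y(2)] by blast
    obtain k where "[k = k1] (mod m)" "[k = k2] (mod n)"
      using binary_chinese_remainder_nat[OF assms(1)] by blast
    then have "[k * a = x] (mod m)" "[k * b = y] (mod n)"
      using k1 k2 cong_scalar_right cong_trans by (metis mult.commute)+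
    then show "(x, y) \<in> range (\<lambda>k. (k * a mod m, k * b mod n))"
      using x y by (auto simp: cong_def intro!: image_eqI[of _ _ k])
  qed
qed

lemma odd_mult_mod_even_iff:
  fixes j k n :: nat
  assumes "odd j" "even n"
  shows "even (k * j mod n) \<longleftrightarrow> even k"
  using assms by (simp add: dvd_mod_iff)

lemma odd_solution_cong_gcd:
  fixes j n :: nat
  assumes "odd j" "even n"
  obtains k0 where "odd k0" "[j * k0 = gcd j n] (mod n)"
proof -
  obtain k0 where k0: "[j * k0 = gcd j n] (mod n)"
    using cong_solve_nat by blast
  then have "[j * k0 = gcd j n] (mod 2)"
    using \<open>even n\<close> cong_dvd_modulus_nat by blast
  moreover have "odd (gcd j n)"
    using \<open>odd j\<close> by (metis dvd_trans gcd_dvd1)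
  ultimately have "odd k0"
    by (auto simp: cong_def mod2_eq_if split: if_splits)
  with k0 show ?thesis
    using that by blast
qed

lemma mult_mod_solution_multiple:
  fixes j k0 n s :: nat
  assumes "[j * k0 = gcd j n] (mod n)" "gcd j n * s < n"
  shows "(k0 * s) * j mod n = gcd j n * s"
proof -
  have "[k0 * s * j = gcd j n * s] (mod n)"
    using cong_scalar_right[OF assms(1), of s] by (simp add: ac_simps)
  then show ?thesis
    using assms(2) by (simp add: cong_def)
qed

lemma image_mult_mod_even:
  fixes j n :: nat
  assumes "odd j" "even n" "n > 0"
  shows "(\<lambda>k. k * j mod n) ` {k. even k} = multiples_below n (2 * gcd j n)"
proof
  have "coprime 2 (gcd j n)"
    using \<open>odd j\<close> by (metis coprime_left_2_iff_odd dvd_trans gcd_dvd1)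
  moreover have "gcd j n dvd k * j mod n" for k
    by (simp add: dvd_mod)
  ultimately show "(\<lambda>k. k * j mod n) ` {k. even k} \<subseteq> multiples_below n (2 * gcd j n)"
    using assms odd_mult_mod_even_iff[OF assms(1,2)]
    by (auto simp: multiples_below_def divides_mult)
  show "multiples_below n (2 * gcd j n) \<subseteq> (\<lambda>k. k * j mod n) ` {k. even k}"
  proof
    fix t
    assume "t \<in> multiples_below n (2 * gcd j n)"
    then obtain s where t: "t = gcd j n * (2 * s)" "t < n"
      by (auto simp: multiples_below_def)
    obtain k0 where "[j * k0 = gcd j n] (mod n)"
      using odd_solution_cong_gcd[OF assms(1,2)] by blast
    then show "t \<in> (\<lambda>k. k * j mod n) ` {k. even k}"
      using mult_mod_solution_multiple t by (intro image_eqI[of _ _ "k0 * (2 * s)"]) auto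
  qed
qed

lemma image_mult_mod_odd:
  fixes j n :: nat
  assumes "odd j" "even n" "n > 0"
  shows "(\<lambda>k. k * j mod n) ` {k. odd k}
           = multiples_below n (gcd j n) - multiples_below n (2 * gcd j n)"
proof
  have "gcd j n dvd k * j mod n" for k
    by (simp add: dvd_mod)
  then show "(\<lambda>k. k * j mod n) ` {k. odd k}
          \<subseteq> multiples_below n (gcd j n) - multiples_below n (2 * gcd j n)"
    using assms odd_mult_mod_even_iff[OF assms(1,2)]
    by (auto simp: multiples_below_def dest: dvd_mult_left)
  show "multiples_below n (gcd j n) - multiples_below n (2 * gcd j n)
          \<subseteq> (\<lambda>k. k * j mod n) ` {k. odd k}"
  proof
    fix t
    assume "t \<in> multiples_below n (gcd j n) - multiples_below n (2 * gcd j n)"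
    then obtain s where t: "t = gcd j n * s" "t < n" "odd s"
      by (auto simp: multiples_below_def)
    obtain k0 where "odd k0" "[j * k0 = gcd j n] (mod n)"
      using odd_solution_cong_gcd[OF assms(1,2)] by blast
    then show "t \<in> (\<lambda>k. k * j mod n) ` {k. odd k}"
      using mult_mod_solution_multiple t by (intro image_eqI[of _ _ "k0 * s"]) auto
  qed
qed

lemma gcd_mult_divisor_coprime:
  fixes a b x y :: nat
  assumes "coprime a b" "x dvd a" "y dvd b"
  shows "gcd (x * y) a = x"
  using assms
  by (metis coprime_mult_right_iff dvd_mult_div_cancel gcd_mult_left_right_cancel gcd_nat.order_iff)

lemma num_divisors_mult:
  fixes a b :: nat
  assumes "coprime a b"
  shows "num_divisors (a * b) = num_divisors a * num_divisors b"
proof -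
  let ?D = "\<lambda>n :: nat. {d. d dvd n \<and> d > 0}"
  have "bij_betw (\<lambda>(x, y). x * y) (?D a \<times> ?D b) (?D (a * b))"
  proof (rule bij_betwI')
    fix p q
    assume "p \<in> ?D a \<times> ?D b" "q \<in> ?D a \<times> ?D b"
    then obtain x y x' y' where "p = (x, y)" "q = (x', y')"
      and "x dvd a" "y dvd b" "x' dvd a" "y' dvd b" "x' > 0"
      by auto
    moreover have "x = x' \<and> y = y'" if "x * y = x' * y'"
    proof -
      have "coprime b a"
        using assms by (simp add: coprime_commute)
      have "x = gcd (x * y) a" "x' = gcd (x' * y') a"
        using gcd_mult_divisor_coprime[OF assms] \<open>x dvd a\<close> \<open>y dvd b\<close> \<open>x' dvd a\<close> \<open>y' dvd b\<close>
        by simp_all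
      moreover have "y = gcd (y * x) b" "y' = gcd (y' * x') b"
        using gcd_mult_divisor_coprime[OF \<open>coprime b a\<close>] \<open>x dvd a\<close> \<open>y dvd b\<close> \<open>x' dvd a\<close> \<open>y' dvd b\<close>
        by simp_all
      ultimately show ?thesis
        using that \<open>x' > 0\<close> by (simp add: mult.commute)
    qed
    ultimately show "((\<lambda>(x, y). x * y) p = (\<lambda>(x, y). x * y) q) = (p = q)"
      by auto
  next
    show "(\<lambda>(x, y). x * y) p \<in> ?D (a * b)" if "p \<in> ?D a \<times> ?D b" for p
      using that by (auto intro: mult_dvd_mono)
  next
    fix d
    assume "d \<in> ?D (a * b)"
    then obtain x y where "d = x * y" "x dvd a" "y dvd b" "d > 0"
      by (auto elim: dvd_productE)
    then show "\<exists>p \<in> ?D a \<times> ?D b. d = (\<lambda>(x, y). x * y) p"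
      by (intro bexI[of _ "(x, y)"]) auto
  qed
  then have "card (?D a \<times> ?D b) = card (?D (a * b))"
    by (rule bij_betw_same_card)
  then show ?thesis
    by (simp add: num_divisors_def card_cartesian_product)
qed

lemma num_divisors_eq_card_dvd: "n > 0 \<Longrightarrow> num_divisors n = card {d. d dvd n}"
  unfolding num_divisors_def by (rule arg_cong[where f = card]) (auto intro: dvd_pos_nat)

lemma odd_divisors_two_power_mult:
  fixes \<beta> u :: nat
  assumes "odd \<beta>"
  shows "{c. c dvd 2 ^ u * \<beta> \<and> odd c} = {c. c dvd \<beta>}"
proof (intro equalityI subsetI; clarify)
  fix c
  assume "c dvd 2 ^ u * \<beta>" "odd c"
  moreover have "coprime c (2 ^ u)"
    using \<open>odd c\<close> by simp
  ultimately show "c dvd \<beta>"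
    using coprime_dvd_mult_right_iff by blast
next
  fix c
  assume "c dvd \<beta>"
  then show "c dvd 2 ^ u * \<beta> \<and> odd c"
    using assms by (auto dest: dvd_trans)
qed

lemma card_divisors_parity_split:
  fixes n :: nat
  assumes "n > 0"
  shows "card {d. d dvd n} = card {d. d dvd n \<and> even d} + card {d. d dvd n \<and> odd d}"
proof -
  have "finite {d. d dvd n \<and> P d}" for P
    using assms by (auto intro: finite_subset[OF _ finite_divisors_nat])
  then have "card ({d. d dvd n \<and> even d} \<union> {d. d dvd n \<and> odd d})
               = card {d. d dvd n \<and> even d} + card {d. d dvd n \<and> odd d}"
    by (intro card_Un_disjoint) auto
  moreover have "{d. d dvd n \<and> even d} \<union> {d. d dvd n \<and> odd d} = {d. d dvd n}"
    by auto
  ultimately show ?thesis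
    by simp
qed

lemma dihedral_sdp_mult:
  "(i, j) \<otimes>\<^bsub>dihedral_sdp m \<alpha>\<^esub> (k, l)
     = ((i + (if even j then k else (m - k) mod m)) mod m, (j + l) mod \<alpha>)"
  by (simp add: dihedral_sdp_def)

lemma dihedral_sdp_one: "\<one>\<^bsub>dihedral_sdp m \<alpha>\<^esub> = (0, 0)"
  by (simp add: dihedral_sdp_def)

lemma carrier_dihedral_sdp: "carrier (dihedral_sdp m \<alpha>) = {0..<m} \<times> {0..<\<alpha>}"
  by (simp add: dihedral_sdp_def)

lemma order_dihedral_sdp: "order (dihedral_sdp m \<alpha>) = m * \<alpha>"
  by (simp add: order_def carrier_dihedral_sdp card_cartesian_product)

text \<open>Read in \<int>/m, the first coordinate of a product is i + (-1)^j k; this turns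
  associativity into a ring identity.\<close>

lemma int_fst_dihedral_sdp_mult:
  assumes "k < m"
  shows "int (fst ((i, j) \<otimes>\<^bsub>dihedral_sdp m \<alpha>\<^esub> (k, l))) = (int i + (-1) ^ j * int k) mod int m"
proof (cases "even j")
  case True
  then show ?thesis by (simp add: dihedral_sdp_mult zmod_int)
next
  case False
  have "int ((i + (m - k) mod m) mod m) = (int i + (int m - int k) mod int m) mod int m"
    using assms by (simp add: zmod_int of_nat_diff)
  also have "\<dots> = (int i - int k) mod int m"
    by (simp add: mod_simps)
  finally show ?thesis using False by (simp add: dihedral_sdp_mult)
qed

lemma minus_one_power_mod_even: "even n \<Longrightarrow> (-1 :: int) ^ (j mod n) = (-1) ^ j"
  by (simp add: minus_one_power_iff dvd_mod_iff)

lemma dihedral_sdp_left_inverse: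
  assumes "even \<alpha>" "i < m" "j < \<alpha>"
  shows "(if even j then (m - i) mod m else i, (\<alpha> - j) mod \<alpha>) \<otimes>\<^bsub>dihedral_sdp m \<alpha>\<^esub> (i, j) = (0, 0)"
    (is "?y \<otimes>\<^bsub>_\<^esub> _ = _")
proof -
  have "even ((\<alpha> - j) mod \<alpha>) \<longleftrightarrow> even j"
    using assms by (simp add: dvd_mod_iff)
  then have "int (fst (?y \<otimes>\<^bsub>dihedral_sdp m \<alpha>\<^esub> (i, j))) = (int (fst ?y) + (-1) ^ j * int i) mod int m"
    using int_fst_dihedral_sdp_mult[OF \<open>i < m\<close>, where i = "fst ?y" and j = "snd ?y" and \<alpha> = \<alpha> and l = j]
    by (simp add: minus_one_power_iff)
  also have "\<dots> = 0"
    using \<open>i < m\<close> by (auto simp: zmod_int of_nat_diff mod_simps)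
  finally show ?thesis
    using \<open>j < \<alpha>\<close> by (simp add: prod_eq_iff dihedral_sdp_mult mod_simps)
qed

lemma dihedral_sdp_assoc:
  assumes "even \<alpha>" "k < m" "p < m"
  shows "(i, j) \<otimes>\<^bsub>dihedral_sdp m \<alpha>\<^esub> (k, l) \<otimes>\<^bsub>dihedral_sdp m \<alpha>\<^esub> (p, q)
           = (i, j) \<otimes>\<^bsub>dihedral_sdp m \<alpha>\<^esub> ((k, l) \<otimes>\<^bsub>dihedral_sdp m \<alpha>\<^esub> (p, q))"
proof -
  let ?G = "dihedral_sdp m \<alpha>"
  obtain a b where ab: "(i, j) \<otimes>\<^bsub>?G\<^esub> (k, l) = (a, b)" by fastforce
  obtain c d where cd: "(k, l) \<otimes>\<^bsub>?G\<^esub> (p, q) = (c, d)" by fastforce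
  have a: "int a = (int i + (-1) ^ j * int k) mod int m" and b: "b = (j + l) mod \<alpha>"
    using int_fst_dihedral_sdp_mult[OF \<open>k < m\<close>, where i = i and j = j and \<alpha> = \<alpha> and l = l] ab
    by (simp_all add: dihedral_sdp_mult)
  have c: "int c = (int k + (-1) ^ l * int p) mod int m" and d: "d = (l + q) mod \<alpha>"
    using int_fst_dihedral_sdp_mult[OF \<open>p < m\<close>, where i = k and j = l and \<alpha> = \<alpha> and l = q] cd
    by (simp_all add: dihedral_sdp_mult)
  have "c < m"
    using cd \<open>k < m\<close> by (auto simp: dihedral_sdp_mult)
  have "int (fst ((a, b) \<otimes>\<^bsub>?G\<^esub> (p, q)))
          = (int i + (-1) ^ j * int k + (-1) ^ j * (-1) ^ l * int p) mod int m"
    using int_fst_dihedral_sdp_mult[OF \<open>p < m\<close>, where i = a and j = b and \<alpha> = \<alpha> and l = q] a b \<open>even \<alpha>\<close>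
    by (simp add: minus_one_power_mod_even power_add mod_simps)
  also have "\<dots> = (int i + (-1) ^ j * (int k + (-1) ^ l * int p)) mod int m"
    by (simp add: algebra_simps)
  also have "\<dots> = (int i + (-1) ^ j * ((int k + (-1) ^ l * int p) mod int m)) mod int m"
    by (metis mod_add_right_eq mod_mult_right_eq)
  also have "\<dots> = int (fst ((i, j) \<otimes>\<^bsub>?G\<^esub> (c, d)))"
    using int_fst_dihedral_sdp_mult[OF \<open>c < m\<close>, where i = i and j = j and \<alpha> = \<alpha> and l = d] c
    by simp
  finally have "fst ((a, b) \<otimes>\<^bsub>?G\<^esub> (p, q)) = fst ((i, j) \<otimes>\<^bsub>?G\<^esub> (c, d))"
    by (simp only: of_nat_eq_iff)
  moreover have "snd ((a, b) \<otimes>\<^bsub>?G\<^esub> (p, q)) = snd ((i, j) \<otimes>\<^bsub>?G\<^esub> (c, d))"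
    using b d by (simp add: dihedral_sdp_mult mod_simps add.assoc)
  ultimately show ?thesis
    by (simp add: ab cd prod_eq_iff)
qed

lemma group_dihedral_sdp:
  assumes "m > 0" "even \<alpha>" "\<alpha> > 0"
  shows "group (dihedral_sdp m \<alpha>)"
proof (rule groupI)
  let ?G = "dihedral_sdp m \<alpha>"
  show "x \<otimes>\<^bsub>?G\<^esub> y \<in> carrier ?G" if "x \<in> carrier ?G" "y \<in> carrier ?G" for x y
    using that assms by (auto simp: dihedral_sdp_def)
  show "\<one>\<^bsub>?G\<^esub> \<in> carrier ?G"
    using assms by (simp add: dihedral_sdp_def)
  show "\<one>\<^bsub>?G\<^esub> \<otimes>\<^bsub>?G\<^esub> x = x" if "x \<in> carrier ?G" for x
    using that by (auto simp: dihedral_sdp_def)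
  show "\<exists>y \<in> carrier ?G. y \<otimes>\<^bsub>?G\<^esub> x = \<one>\<^bsub>?G\<^esub>" if x_in: "x \<in> carrier ?G" for x
  proof -
    obtain i j where x: "x = (i, j)" "i < m" "j < \<alpha>"
      using x_in by (auto simp: carrier_dihedral_sdp)
    then show ?thesis
      using dihedral_sdp_left_inverse[OF \<open>even \<alpha>\<close> x(2,3)]
      by (intro bexI[of _ "(if even j then (m - i) mod m else i, (\<alpha> - j) mod \<alpha>)"])
         (auto simp: carrier_dihedral_sdp dihedral_sdp_one)
  qed
  show "x \<otimes>\<^bsub>?G\<^esub> y \<otimes>\<^bsub>?G\<^esub> z = x \<otimes>\<^bsub>?G\<^esub> (y \<otimes>\<^bsub>?G\<^esub> z)"
    if "x \<in> carrier ?G" "y \<in> carrier ?G" "z \<in> carrier ?G" for x y z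
    using that dihedral_sdp_assoc[OF \<open>even \<alpha>\<close>] by (auto simp: carrier_dihedral_sdp)
qed

lemma dihedral_sdp_pow_even:
  assumes "even j" "even \<alpha>" "i < m"
  shows "(i, j) [^]\<^bsub>dihedral_sdp m \<alpha>\<^esub> (k :: nat) = (k * i mod m, k * j mod \<alpha>)"
proof (induction k)
  case 0
  then show ?case by (simp add: dihedral_sdp_one)
next
  case (Suc k)
  have "even (k * j mod \<alpha>)"
    using assms by (simp add: dvd_mod_iff)
  with Suc show ?case
    by (simp add: dihedral_sdp_mult mod_simps algebra_simps)
qed

lemma dihedral_sdp_pow_odd:
  assumes "odd j" "even \<alpha>" "i < m"
  shows "(i, j) [^]\<^bsub>dihedral_sdp m \<alpha>\<^esub> (k :: nat) = (if even k then 0 else i, k * j mod \<alpha>)"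
proof (induction k)
  case 0
  then show ?case by (simp add: dihedral_sdp_one)
next
  case (Suc k)
  have "even (k * j mod \<alpha>) \<longleftrightarrow> even k"
    using odd_mult_mod_even_iff[OF assms(1,2)] .
  moreover have "(i + (m - i) mod m) mod m = 0"
    using \<open>i < m\<close> by (cases "i = 0") auto
  ultimately show ?case
    using Suc \<open>i < m\<close> by (simp add: dihedral_sdp_mult mod_simps algebra_simps)
qed

text \<open>The cyclic subgroup generated by a^i x^j with j odd and gcd(j, \<alpha>) = c: its even
  powers form <x^(2c)>, its odd powers are a^i times the remaining elements of <x^c>.\<close>

definition odd_cyclic_subgroup :: "nat \<Rightarrow> nat \<Rightarrow> nat \<Rightarrow> (nat \<times> nat) set" where
  "odd_cyclic_subgroup \<alpha> i c =
     {0} \<times> multiples_below \<alpha> (2 * c) \<union> {i} \<times> (multiples_below \<alpha> c - multiples_below \<alpha> (2 * c))"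

lemma odd_cyclic_subgroup_self:
  assumes "c dvd \<alpha>" "odd c" "even \<alpha>" "\<alpha> > 0"
  shows "(i, c) \<in> odd_cyclic_subgroup \<alpha> i c"
proof -
  have "c < \<alpha>"
    using assms by (metis dvd_imp_le le_neq_implies_less)
  then show ?thesis
    using \<open>odd c\<close> by (auto simp: odd_cyclic_subgroup_def multiples_below_def)
qed

lemma odd_cyclic_subgroup_oddD:
  assumes "odd c" "(i, c) \<in> odd_cyclic_subgroup \<alpha> i' c'"
  shows "i = i'" "c' dvd c"
  using assms by (auto simp: odd_cyclic_subgroup_def multiples_below_def)

lemma generate_dihedral_sdp_singleton:
  assumes "m > 0" "even \<alpha>" "\<alpha> > 0" "g \<in> carrier (dihedral_sdp m \<alpha>)"
  shows "generate (dihedral_sdp m \<alpha>) {g} = range (\<lambda>k :: nat. g [^]\<^bsub>dihedral_sdp m \<alpha>\<^esub> k)"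
  using group.generate_pow_on_finite_carrier[OF group_dihedral_sdp[OF assms(1-3)] _ assms(4)]
  by (auto simp: carrier_dihedral_sdp)

lemma generate_dihedral_sdp_even:
  assumes "m > 0" "even \<alpha>" "\<alpha> > 0" "coprime m \<alpha>" "i < m" "j < \<alpha>" "even j"
  shows "generate (dihedral_sdp m \<alpha>) {(i, j)}
           = multiples_below m (gcd i m) \<times> multiples_below \<alpha> (gcd j \<alpha>)"
  using assms
  by (simp add: generate_dihedral_sdp_singleton carrier_dihedral_sdp dihedral_sdp_pow_even
                range_mult_mod_coprime_pair)

lemma generate_dihedral_sdp_odd:
  assumes "m > 0" "even \<alpha>" "\<alpha> > 0" "i < m" "j < \<alpha>" "odd j"
  shows "generate (dihedral_sdp m \<alpha>) {(i, j)} = odd_cyclic_subgroup \<alpha> i (gcd j \<alpha>)"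
proof -
  have "range (\<lambda>k. (if even k then 0 else i, k * j mod \<alpha>))
          = {0} \<times> (\<lambda>k. k * j mod \<alpha>) ` {k. even k} \<union> {i} \<times> (\<lambda>k. k * j mod \<alpha>) ` {k. odd k}"
    by (auto simp: image_iff split: if_splits)
  then show ?thesis
    using assms
    by (simp add: generate_dihedral_sdp_singleton carrier_dihedral_sdp dihedral_sdp_pow_odd
                  image_mult_mod_even image_mult_mod_odd odd_cyclic_subgroup_def)
qed

lemma multiples_times_in_cyclic_subgroups:
  assumes "m > 0" "even \<alpha>" "\<alpha> > 0" "coprime m \<alpha>" "d dvd m" "e dvd \<alpha>" "even e"
  shows "multiples_below m d \<times> multiples_below \<alpha> e \<in> cyclic_subgroups (dihedral_sdp m \<alpha>)"
proof -
  have "gcd (d mod m) m = d" "gcd (e mod \<alpha>) \<alpha> = e" "even (e mod \<alpha>)"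
    using assms by (simp_all add: gcd_red_nat[symmetric] gcd_nat.absorb1 gcd.commute dvd_mod_iff)
  then have "multiples_below m d \<times> multiples_below \<alpha> e = generate (dihedral_sdp m \<alpha>) {(d mod m, e mod \<alpha>)}"
    using assms by (simp add: generate_dihedral_sdp_even)
  then show ?thesis
    unfolding cyclic_subgroups_def using assms
    by (intro CollectI bexI[of _ "(d mod m, e mod \<alpha>)"]) (simp_all add: carrier_dihedral_sdp)
qed

lemma odd_cyclic_subgroup_in_cyclic_subgroups:
  assumes "m > 0" "even \<alpha>" "\<alpha> > 0" "i < m" "c dvd \<alpha>" "odd c"
  shows "odd_cyclic_subgroup \<alpha> i c \<in> cyclic_subgroups (dihedral_sdp m \<alpha>)"
proof -
  have "c < \<alpha>"
    using assms by (metis dvd_imp_le le_neq_implies_less)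
  moreover have "gcd c \<alpha> = c"
    using assms by (simp add: gcd_nat.absorb1)
  ultimately have "odd_cyclic_subgroup \<alpha> i c = generate (dihedral_sdp m \<alpha>) {(i, c)}"
    using assms by (simp add: generate_dihedral_sdp_odd)
  then show ?thesis
    unfolding cyclic_subgroups_def using assms \<open>c < \<alpha>\<close>
    by (intro CollectI bexI[of _ "(i, c)"]) (simp_all add: carrier_dihedral_sdp)
qed

lemma cyclic_subgroups_dihedral_sdp:
  assumes "m > 0" "even \<alpha>" "\<alpha> > 0" "coprime m \<alpha>"
  shows "cyclic_subgroups (dihedral_sdp m \<alpha>) =
           (\<lambda>(d, e). multiples_below m d \<times> multiples_below \<alpha> e) ` ({d. d dvd m} \<times> {e. e dvd \<alpha> \<and> even e})
           \<union> (\<lambda>(i, c). odd_cyclic_subgroup \<alpha> i c) ` ({..<m} \<times> {c. c dvd \<alpha> \<and> odd c})"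
    (is "_ = ?Even \<union> ?Odd")
proof (intro equalityI subsetI)
  fix H
  assume "H \<in> cyclic_subgroups (dihedral_sdp m \<alpha>)"
  then obtain i j where ij: "i < m" "j < \<alpha>" and H: "H = generate (dihedral_sdp m \<alpha>) {(i, j)}"
    by (auto simp: cyclic_subgroups_def carrier_dihedral_sdp)
  show "H \<in> ?Even \<union> ?Odd"
  proof (cases "even j")
    case True
    then have "H = multiples_below m (gcd i m) \<times> multiples_below \<alpha> (gcd j \<alpha>)"
      using H generate_dihedral_sdp_even[OF assms ij] by simp
    moreover have "even (gcd j \<alpha>)"
      using True \<open>even \<alpha>\<close> by simp
    ultimately show ?thesis
      by blast
  next
    case False
    then have "H = odd_cyclic_subgroup \<alpha> i (gcd j \<alpha>)"
      using H generate_dihedral_sdp_odd[OF assms(1-3) ij] by simp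
    moreover have "odd (gcd j \<alpha>)"
      using False by (metis dvd_trans gcd_dvd1)
    ultimately show ?thesis
      using \<open>i < m\<close> by blast
  qed
next
  fix H
  assume "H \<in> ?Even \<union> ?Odd"
  then show "H \<in> cyclic_subgroups (dihedral_sdp m \<alpha>)"
    using multiples_times_in_cyclic_subgroups[OF assms] odd_cyclic_subgroup_in_cyclic_subgroups[OF assms(1-3)]
    by auto
qed

lemma inj_on_multiples_below_times:
  assumes "m > 0" "n > 0"
  shows "inj_on (\<lambda>(d, e). multiples_below m d \<times> multiples_below n e) ({d. d dvd m} \<times> {e. e dvd n})"
proof (intro inj_onI, clarify)
  fix d e d' e'
  assume "d dvd m" "e dvd n" "d' dvd m" "e' dvd n"
    and "multiples_below m d \<times> multiples_below n e = multiples_below m d' \<times> multiples_below n e'"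
  moreover have "0 \<in> multiples_below m d" "0 \<in> multiples_below n e"
    using assms by (simp_all add: multiples_below_def)
  ultimately have "multiples_below m d = multiples_below m d'" "multiples_below n e = multiples_below n e'"
    by (auto simp: times_eq_iff)
  then show "d = d' \<and> e = e'"
    using inj_onD[OF inj_on_multiples_below[OF \<open>m > 0\<close>]] inj_onD[OF inj_on_multiples_below[OF \<open>n > 0\<close>]]
      \<open>d dvd m\<close> \<open>e dvd n\<close> \<open>d' dvd m\<close> \<open>e' dvd n\<close>
    by blast
qed

lemma inj_on_odd_cyclic_subgroup:
  assumes "even \<alpha>" "\<alpha> > 0"
  shows "inj_on (\<lambda>(i, c). odd_cyclic_subgroup \<alpha> i c) (UNIV \<times> {c. c dvd \<alpha> \<and> odd c})"
proof (intro inj_onI, clarify)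
  fix i c i' c'
  assume c: "c dvd \<alpha>" "odd c" and c': "c' dvd \<alpha>" "odd c'"
    and eq: "odd_cyclic_subgroup \<alpha> i c = odd_cyclic_subgroup \<alpha> i' c'"
  have "(i, c) \<in> odd_cyclic_subgroup \<alpha> i' c'"
    using odd_cyclic_subgroup_self[OF c assms, of i] unfolding eq .
  moreover have "(i', c') \<in> odd_cyclic_subgroup \<alpha> i c"
    using odd_cyclic_subgroup_self[OF c' assms, of i'] unfolding eq .
  ultimately show "i = i' \<and> c = c'"
    using odd_cyclic_subgroup_oddD c c' by (metis dvd_antisym)
qed

lemma odd_cyclic_subgroup_neq_multiples_times:
  assumes "c dvd \<alpha>" "odd c" "even \<alpha>" "\<alpha> > 0" "even e"
  shows "multiples_below m d \<times> multiples_below \<alpha> e \<noteq> odd_cyclic_subgroup \<alpha> i c"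
proof
  assume eq: "multiples_below m d \<times> multiples_below \<alpha> e = odd_cyclic_subgroup \<alpha> i c"
  have "(i, c) \<in> multiples_below m d \<times> multiples_below \<alpha> e"
    using odd_cyclic_subgroup_self[OF assms(1-4), of i] unfolding eq .
  then have "e dvd c"
    by (simp add: multiples_below_def)
  then show False
    using assms(2,5) by (auto dest: dvd_trans)
qed

lemma card_cyclic_subgroups_dihedral_sdp:
  assumes "m > 0" "even \<alpha>" "\<alpha> > 0" "coprime m \<alpha>"
  shows "card (cyclic_subgroups (dihedral_sdp m \<alpha>))
           = card {d. d dvd m} * card {e. e dvd \<alpha> \<and> even e} + m * card {c. c dvd \<alpha> \<and> odd c}"
proof -
  let ?Dm = "{d. d dvd m}" and ?Ev = "{e. e dvd \<alpha> \<and> even e}" and ?Od = "{c. c dvd \<alpha> \<and> odd c}"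
  let ?E = "\<lambda>(d, e). multiples_below m d \<times> multiples_below \<alpha> e"
  let ?O = "\<lambda>(i, c). odd_cyclic_subgroup \<alpha> i c"
  have "inj_on ?E (?Dm \<times> ?Ev)"
    using inj_on_multiples_below_times[OF \<open>m > 0\<close> \<open>\<alpha> > 0\<close>] by (rule inj_on_subset) auto
  moreover have "inj_on ?O ({..<m} \<times> ?Od)"
    using inj_on_odd_cyclic_subgroup[OF \<open>even \<alpha>\<close> \<open>\<alpha> > 0\<close>] by (rule inj_on_subset) auto
  moreover have "?E ` (?Dm \<times> ?Ev) \<inter> ?O ` ({..<m} \<times> ?Od) = {}"
    using odd_cyclic_subgroup_neq_multiples_times[OF _ _ \<open>even \<alpha>\<close> \<open>\<alpha> > 0\<close>] by fastforce
  moreover have "finite ?Dm" "finite ?Ev" "finite ?Od"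
    using assms by (simp_all add: finite_divisors_nat)
  ultimately show ?thesis
    by (simp add: cyclic_subgroups_dihedral_sdp[OF assms] card_Un_disjoint card_image
                  card_cartesian_product)
qed

theorem proposition5p1:
  fixes \<alpha> \<beta> m u :: nat
  assumes "\<alpha> > 0" "\<beta> > 0" "m > 0" "u > 0"
    and "\<alpha> = 2 ^ u * \<beta>" and "odd \<beta>" and "coprime \<alpha> m"
  shows "int (card (cyclic_subgroups (dihedral_sdp m \<alpha>)))
           = int (num_divisors (order (dihedral_sdp m \<alpha>)))
             + int (num_divisors \<beta>) * (int m - int (num_divisors m))"
proof -
  let ?E = "card {e. e dvd \<alpha> \<and> even e}"
  have "even \<alpha>" "coprime m \<alpha>"
    using assms by (simp_all add: coprime_commute)
  have odd_part: "card {c. c dvd \<alpha> \<and> odd c} = num_divisors \<beta>"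
    using assms by (simp add: odd_divisors_two_power_mult num_divisors_eq_card_dvd)
  have "card (cyclic_subgroups (dihedral_sdp m \<alpha>)) = num_divisors m * ?E + m * num_divisors \<beta>"
    using card_cyclic_subgroups_dihedral_sdp[OF \<open>m > 0\<close> \<open>even \<alpha>\<close> \<open>\<alpha> > 0\<close> \<open>coprime m \<alpha>\<close>]
      odd_part assms(3) by (simp add: num_divisors_eq_card_dvd)
  moreover have "num_divisors (order (dihedral_sdp m \<alpha>)) = num_divisors m * (?E + num_divisors \<beta>)"
    using num_divisors_mult[OF \<open>coprime m \<alpha>\<close>] card_divisors_parity_split[OF \<open>\<alpha> > 0\<close>] odd_part assms(1)
    by (simp add: order_dihedral_sdp num_divisors_eq_card_dvd)
  ultimately show ?thesis
    by (simp add: algebra_simps)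
qed

end
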